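(* If two groups $\mathsf G^{(e_2,e_3,h_2,h_3)}_\beta$ and $\mathsf G^{(e_2',e_3',h_2',h_3')}_{\beta'}$ (as defined in the context) are isomorphic as algebraic permutation groups, then $(e_2',e_3',h_2',h_3')=(e_2,e_3,h_2,h_3)$.
   Context: Let $\mathsf k$ be an algebraically closed field. For admissible data, $\mathsf G^{(e_2,e_3,h_2,h_3)}_\beta=(G,\mathsf k^2,\overline\Omega)$ denotes the following group. On $\mathsf k^3$ define $(x_1,x_2,x_3)(y_1,y_2,y_3)=\big(x_1+y_1+\psi_1(x_3,y_2,y_3),\ x_2+y_2+\psi_2(x_3,y_3),\ x_3+y_3\big)$ with $\psi_1(x_3,y_2,y_3)=y_2^{h_2}x_3^{h_3}+\beta(x_3,y_3)$, $h_i=p^{l_i}$ if $\mathrm{char}\,\mathsf k=p>0$ and $h_i=1$ otherwise, and either (A) $\psi_2=0$ and $\beta\in\{0,\ \sum_{i=1}^{p-1}\frac1p\binom pi x_3^{ip^r}y_3^{(p-i)p^r},\ x_3^{p^r}y_3^{p^s}\}$ ($r<s$; nonzero options only in characteristic $p>0$), or (B) $\mathrm{char}\,\mathsf k=p>2$, $\psi_2=x_3^{p^m}y_3^{p^n}$ with $m<n$, $l_3-l_2\in\{m,n\}$, and $\beta=\frac12x_3^{2p^{l_3}}y_3^{p^{l_2+n}}$ if $l_3-l_2=m$, $\beta=x_3^{p^{l_3}+p^{l_2+m}}y_3^{p^{l_3}}+\frac12x_3^{p^{l_2+m}}y_3^{2p^{l_3}}$ if $l_3-l_2=n$. $a\in\mathsf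 k^*$ acts on $\mathsf k^3$ by $(u_1,u_2,u_3)\mapsto(a^{e_1}u_1,a^{e_2}u_2,a^{e_3}u_3)$ with $e_3$ a positive power of $p$ (or $1$ in characteristic $0$), $e_1=e_2h_2+e_3h_3$, and if $\beta\neq0$ also $e_1=e_3\deg\beta$, $e_2=e_3(\deg\beta-h_3)/h_2$. $G=\mathsf k^3\rtimes\mathsf k^*$ for this action; it acts on $\mathsf k^2$ by $(u_1,u_2,u_3,a)\cdot(x,y)=\big(u_1+a^{e_1}x+\psi_1(u_3,0,a^{e_3}y),\ u_3+a^{e_3}y\big)$, and the blocks $\overline\Omega$ are the horizontal lines $y=\text{const}$. An isomorphism of algebraic permutation groups is a pair $(\Phi_1,\Phi_2)$ with $\Phi_1$ an isomorphism of algebraic groups and $\Phi_2:\mathsf k^2\to\mathsf k^2$ a bijective morphism mapping blocks onto blocks with $\Phi_2(g(P))=\Phi_1(g)(\Phi_2(P))$. *)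

theory Defs
  imports "HOL-Computational_Algebra.Polynomial"
begin

text \<open>The shape of beta: A with beta = 0, A with the binomial sum,
  A with the monomial x3^(p^r) y3^(p^s), and case B (psi2 = x3^(p^m) y3^(p^n),
  with m = r, n = s).\<close>
datatype bkind = Bzero | Bsum | Bmono | TypeB

record gdata =
  d_e2 :: int
  d_e3 :: nat
  d_l2 :: nat
  d_l3 :: nat
  d_bk :: bkind
  d_r :: nat
  d_s :: nat

definition hexp :: "nat \<Rightarrow> nat \<Rightarrow> nat" where
  "hexp p l = (if p = 0 then 1 else p ^ l)"

definition h2 :: "'k::field itself \<Rightarrow> gdata \<Rightarrow> nat" where
  "h2 T d = hexp CHAR('k) (d_l2 d)"

definition h3 :: "'k::field itself \<Rightarrow> gdata \<Rightarrow> nat" where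
  "h3 T d = hexp CHAR('k) (d_l3 d)"

definition beta :: "gdata \<Rightarrow> 'k::field \<Rightarrow> 'k \<Rightarrow> 'k" where
  "beta d x y = (let p = CHAR('k); r = d_r d; s = d_s d; l2 = d_l2 d; l3 = d_l3 d in
     case d_bk d of
       Bzero \<Rightarrow> 0
     | Bsum \<Rightarrow> (\<Sum>i\<in>{1..p-1}. of_nat ((p choose i) div p) * x ^ (i * p ^ r) * y ^ ((p - i) * p ^ r))
     | Bmono \<Rightarrow> x ^ (p ^ r) * y ^ (p ^ s)
     | TypeB \<Rightarrow> (if l3 = l2 + r
                 then inverse 2 * x ^ (2 * p ^ l3) * y ^ (p ^ (l2 + s))
                 else x ^ (p ^ l3 + p ^ (l2 + r)) * y ^ (p ^ l3)
                      + inverse 2 * x ^ (p ^ (l2 + r)) * y ^ (2 * p ^ l3)))"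

text \<open>Total degree of beta (only used when beta is nonzero).\<close>
definition degbeta :: "'k::field itself \<Rightarrow> gdata \<Rightarrow> nat" where
  "degbeta T d = (let p = CHAR('k); r = d_r d; s = d_s d; l2 = d_l2 d; l3 = d_l3 d in
     case d_bk d of
       Bzero \<Rightarrow> 0
     | Bsum \<Rightarrow> p ^ (r + 1)
     | Bmono \<Rightarrow> p ^ r + p ^ s
     | TypeB \<Rightarrow> (if l3 = l2 + r then 2 * p ^ l3 + p ^ (l2 + s)
                 else 2 * p ^ l3 + p ^ (l2 + r)))"

definition psi1 :: "gdata \<Rightarrow> 'k::field \<Rightarrow> 'k \<Rightarrow> 'k \<Rightarrow> 'k" where
  "psi1 d x3 y2 y3 = y2 ^ h2 TYPE('k) d * x3 ^ h3 TYPE('k) d + beta d x3 y3"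

definition psi2 :: "gdata \<Rightarrow> 'k::field \<Rightarrow> 'k \<Rightarrow> 'k" where
  "psi2 d x3 y3 = (if d_bk d = TypeB
      then x3 ^ (CHAR('k) ^ d_r d) * y3 ^ (CHAR('k) ^ d_s d) else 0)"

definition e1 :: "'k::field itself \<Rightarrow> gdata \<Rightarrow> int" where
  "e1 T d = d_e2 d * int (h2 T d) + int (d_e3 d) * int (h3 T d)"

definition admissible :: "'k::field itself \<Rightarrow> gdata \<Rightarrow> bool" where
  "admissible T d \<longleftrightarrow>
     (if CHAR('k) = 0 then d_e3 d = 1 else (\<exists>t>0. d_e3 d = CHAR('k) ^ t))
   \<and> (d_bk d \<in> {Bsum, Bmono} \<longrightarrow> CHAR('k) > 0)
   \<and> (d_bk d = Bmono \<longrightarrow> d_r d < d_s d)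
   \<and> (d_bk d = TypeB \<longrightarrow> CHAR('k) > 2 \<and> d_r d < d_s d
        \<and> (d_l3 d = d_l2 d + d_r d \<or> d_l3 d = d_l2 d + d_s d))
   \<and> (d_bk d \<noteq> Bzero \<longrightarrow>
        e1 T d = int (d_e3 d) * int (degbeta T d)
      \<and> d_e2 d * int (h2 T d) = int (d_e3 d) * (int (degbeta T d) - int (h3 T d)))"

definition mult3 :: "gdata \<Rightarrow> 'k::field \<times> 'k \<times> 'k \<Rightarrow> 'k \<times> 'k \<times> 'k \<Rightarrow> 'k \<times> 'k \<times> 'k" where
  "mult3 d x y = (case x of (x1, x2, x3) \<Rightarrow> case y of (y1, y2, y3) \<Rightarrow>
     (x1 + y1 + psi1 d x3 y2 y3, x2 + y2 + psi2 d x3 y3, x3 + y3))"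

definition tact :: "gdata \<Rightarrow> 'k::field \<Rightarrow> 'k \<times> 'k \<times> 'k \<Rightarrow> 'k \<times> 'k \<times> 'k" where
  "tact d a u = (case u of (u1, u2, u3) \<Rightarrow>
     (a powi e1 TYPE('k) d * u1, a powi d_e2 d * u2, a ^ d_e3 d * u3))"

text \<open>The group G = k^3 semidirect k^*, elements ((u1,u2,u3), a) with a nonzero.\<close>
definition Gcarrier :: "(('k::field \<times> 'k \<times> 'k) \<times> 'k) set" where
  "Gcarrier = {g. snd g \<noteq> 0}"

definition Gmult :: "gdata \<Rightarrow> ('k::field \<times> 'k \<times> 'k) \<times> 'k \<Rightarrow> ('k \<times> 'k \<times> 'k) \<times> 'k \<Rightarrow> ('k \<times> 'k \<times> 'k) \<times> 'k" where
  "Gmult d g h = (case g of (u, a) \<Rightarrow> case h of (v, b) \<Rightarrow> (mult3 d u (tact d a v), a * b))"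

definition Gact :: "gdata \<Rightarrow> ('k::field \<times> 'k \<times> 'k) \<times> 'k \<Rightarrow> 'k \<times> 'k \<Rightarrow> 'k \<times> 'k" where
  "Gact d g P = (case g of ((u1, u2, u3), a) \<Rightarrow> case P of (x, y) \<Rightarrow>
     (u1 + a powi e1 TYPE('k) d * x + psi1 d u3 0 (a ^ d_e3 d * y), u3 + a ^ d_e3 d * y))"

inductive_set pfun :: "('a \<Rightarrow> 'k::field) set \<Rightarrow> ('a \<Rightarrow> 'k) set" for gens where
  gen: "f \<in> gens \<Longrightarrow> f \<in> pfun gens"
| const: "(\<lambda>_. c) \<in> pfun gens"
| add: "f \<in> pfun gens \<Longrightarrow> g \<in> pfun gens \<Longrightarrow> (\<lambda>x. f x + g x) \<in> pfun gens"
| mul: "f \<in> pfun gens \<Longrightarrow> g \<in> pfun gens \<Longrightarrow> (\<lambda>x. f x * g x) \<in> pfun gens"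

text \<open>Coordinate ring of the variety k^3 x k^*: k[u1,u2,u3,a,a^-1].\<close>
definition Gregular :: "((('k::field \<times> 'k \<times> 'k) \<times> 'k) \<Rightarrow> 'k) set" where
  "Gregular = pfun {\<lambda>g. fst (fst g), \<lambda>g. fst (snd (fst g)), \<lambda>g. snd (snd (fst g)),
                    \<lambda>g. snd g, \<lambda>g. inverse (snd g)}"

definition Gmorph :: "((('k::field \<times> 'k \<times> 'k) \<times> 'k) \<Rightarrow> (('k \<times> 'k \<times> 'k) \<times> 'k)) \<Rightarrow> bool" where
  "Gmorph f \<longleftrightarrow> f ` Gcarrier \<subseteq> Gcarrier \<and>
     (\<forall>c \<in> {\<lambda>g. fst (fst g), \<lambda>g. fst (snd (fst g)), \<lambda>g. snd (snd (fst g)), \<lambda>g. snd g}.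
        \<exists>q \<in> Gregular. \<forall>g \<in> Gcarrier. c (f g) = q g)"

definition A2morph :: "('k::field \<times> 'k \<Rightarrow> 'k \<times> 'k) \<Rightarrow> bool" where
  "A2morph f \<longleftrightarrow> (\<lambda>P. fst (f P)) \<in> pfun {fst, snd} \<and> (\<lambda>P. snd (f P)) \<in> pfun {fst, snd}"

text \<open>Isomorphism of algebraic permutation groups (G_d, k^2, horizontal lines)
  to (G_d', k^2, horizontal lines).\<close>
definition alg_perm_iso :: "'k::field itself \<Rightarrow> gdata \<Rightarrow> gdata
    \<Rightarrow> ((('k \<times> 'k \<times> 'k) \<times> 'k) \<Rightarrow> (('k \<times> 'k \<times> 'k) \<times> 'k)) \<Rightarrow> ('k \<times> 'k \<Rightarrow> 'k \<times> 'k) \<Rightarrow> bool" where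
  "alg_perm_iso T d d' \<Phi>1 \<Phi>2 \<longleftrightarrow>
     bij_betw \<Phi>1 Gcarrier Gcarrier
   \<and> (\<forall>g \<in> Gcarrier. \<forall>h \<in> Gcarrier. \<Phi>1 (Gmult d g h) = Gmult d' (\<Phi>1 g) (\<Phi>1 h))
   \<and> Gmorph \<Phi>1
   \<and> (\<exists>\<Psi>. Gmorph \<Psi> \<and> (\<forall>g \<in> Gcarrier. \<Psi> (\<Phi>1 g) = g \<and> \<Phi>1 (\<Psi> g) = g))
   \<and> bij \<Phi>2 \<and> A2morph \<Phi>2
   \<and> (\<forall>c. \<exists>c'. \<Phi>2 ` {P. snd P = c} = {P. snd P = c'})
   \<and> (\<forall>g \<in> Gcarrier. \<forall>P. \<Phi>2 (Gact d g P) = Gact d' (\<Phi>1 g) (\<Phi>2 P))"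

end

theory Submission
  imports Defs "HOL-Computational_Algebra.Primes"
begin

(* 1. Polynomial facts over k: a polynomial bijection of k fixing 0 with polynomial inverse is
      linear; a nowhere vanishing polynomial is constant; exponents of monomial identities
      and of character identities a^m = a^n on k^* agree.
   2. Regular functions on G restrict to polynomials on lines of the unipotent radical
      U = k^3 \<times> {1} and to Laurent polynomials on the torus {0} \<times> k^*.
   3. F maps U to U (torus coordinate is a nowhere vanishing polynomial), and it preserves
      the two subgroups of U defined by the action: block stabilisers (u3 = 0) and the
      kernel (the second axis).  Hence F restricts to linear maps on all three axes.
   4. The commutator term s^h2 t^h3 is transported to the one of d', so h2, h3 agree.
   5. Conjugation by the torus gives a character \<chi> with \<chi>(a)^e3' = a^e3 and
      \<chi>(a)^e2' = a^e2; Laurentness forces e3 = e3', then \<chi> = id and e2 = e2'. *)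

definition polyfun :: "('k::comm_ring_1 \<Rightarrow> 'k) \<Rightarrow> bool" where
  "polyfun f \<longleftrightarrow> (\<exists>p. \<forall>t. f t = poly p t)"

text \<open>An algebraically closed field is infinite: otherwise \<Prod>(x - a) + 1 has no root.\<close>
lemma alg_closed_infinite: "infinite (UNIV :: 'k::alg_closed_field set)"
proof
  assume fin: "finite (UNIV :: 'k set)"
  define p :: "'k poly" where "p = (\<Prod>a\<in>UNIV. [:-a, 1:]) + 1"
  have "degree (\<Prod>a\<in>(UNIV::'k set). [:-a, 1:]) = card (UNIV::'k set)"
    by (subst degree_prod_eq_sum_degree) auto
  moreover have "card (UNIV :: 'k set) > 0" using fin by (simp add: card_gt_0_iff)
  ultimately have "degree p > 0" unfolding p_def by (simp add: degree_add_eq_left)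
  then obtain x where "poly p x = 0" using alg_closed_imp_poly_has_root by blast
  moreover have "poly (\<Prod>a\<in>(UNIV::'k set). [:-a, 1:]) x = 0" by (simp add: poly_prod fin)
  ultimately show False by (simp add: p_def)
qed

lemma nonzero_infinite: "infinite {x :: 'k::alg_closed_field. x \<noteq> 0}"
proof -
  have "UNIV = insert 0 {x :: 'k. x \<noteq> 0}" by auto
  thus ?thesis using alg_closed_infinite[where 'k='k] by (metis finite_insert)
qed

lemma poly_eq_on_infinite:
  fixes p q :: "'k::field poly"
  assumes "infinite S" and "\<forall>x\<in>S. poly p x = poly q x"
  shows "p = q"
proof (rule ccontr)
  assume "p \<noteq> q"
  hence "finite {x. poly (p - q) x = 0}" by (intro poly_roots_finite) simp
  moreover have "S \<subseteq> {x. poly (p - q) x = 0}" using assms(2) by auto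
  ultimately show False using assms(1) finite_subset by blast
qed

text \<open>A polynomial self-map of k fixing 0 with a polynomial right inverse has degree 1, so it
  is multiplication by a nonzero scalar.\<close>
lemma polyfun_inverse_linear:
  fixes f g :: "'k::alg_closed_field \<Rightarrow> 'k"
  assumes "polyfun f" "polyfun g" "\<And>t. f (g t) = t" "f 0 = 0"
  shows "\<exists>c. c \<noteq> 0 \<and> (\<forall>t. f t = c * t)"
proof -
  obtain P Q where P: "\<And>t. f t = poly P t" and Q: "\<And>t. g t = poly Q t"
    using assms(1,2) unfolding polyfun_def by blast
  have "pcompose P Q = [:0, 1:]"
    using assms(3) by (intro poly_eq_on_infinite[OF alg_closed_infinite]) (simp add: poly_pcompose P Q)
  hence "degree (pcompose P Q) = 1" by simp
  hence "degree P * degree Q = 1" by (simp add: degree_pcompose)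
  hence deg: "degree P = 1" by simp
  have "coeff P 0 = 0" using assms(4) by (simp add: P poly_0_coeff_0)
  moreover have "coeff P 1 \<noteq> 0"
  proof -
    have "P \<noteq> 0" using deg by auto
    hence "lead_coeff P \<noteq> 0" by simp
    thus ?thesis using deg by simp
  qed
  moreover have "poly P t = coeff P 0 + coeff P 1 * t" for t
    using deg by (simp add: poly_altdef atMost_Suc mult.commute)
  ultimately show ?thesis by (intro exI[of _ "coeff P 1"]) (simp add: P)
qed

lemma polyfun_nonvanishing_const:
  fixes f :: "'k::alg_closed_field \<Rightarrow> 'k"
  assumes "polyfun f" "\<And>t. f t \<noteq> 0"
  shows "f t = f 0"
proof -
  obtain P where P: "\<And>t. f t = poly P t" using assms(1) unfolding polyfun_def by blast
  have "\<forall>t. poly P t \<noteq> 0" using assms(2) by (simp add: P [symmetric])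
  hence "degree P = 0" using alg_closed_imp_poly_has_root by blast
  then obtain c where "P = [:c:]" by (rule degree_eq_zeroE)
  thus ?thesis by (simp add: P)
qed

lemma monomial_exponent_unique:
  fixes a b :: "'k::alg_closed_field"
  assumes "\<And>t. a * t ^ m = b * t ^ n" and "a \<noteq> 0"
  shows "m = n"
proof -
  have "monom a m = monom b n"
    by (rule poly_eq_on_infinite[OF alg_closed_infinite]) (simp add: poly_monom assms)
  hence "coeff (monom a m) m = coeff (monom b n) m" by simp
  thus ?thesis using assms(2) by (auto split: if_splits)
qed

lemma power_identity_exponent:
  assumes "\<And>a::'k::alg_closed_field. a \<noteq> 0 \<Longrightarrow> a ^ m = 1"
  shows "m = 0"
proof (rule ccontr)
  assume "m \<noteq> 0"
  hence "coeff (monom (1::'k) m - 1) m = 1" by simp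
  hence "monom (1::'k) m - 1 \<noteq> 0" by (metis coeff_0 zero_neq_one)
  hence "finite {x :: 'k. poly (monom 1 m - 1) x = 0}" by (rule poly_roots_finite)
  moreover have "{x :: 'k. x \<noteq> 0} \<subseteq> {x. poly (monom 1 m - 1) x = 0}"
    using assms by (auto simp: poly_monom)
  ultimately show False using nonzero_infinite finite_subset by blast
qed

lemma powi_identity_exponent:
  fixes m n :: int
  assumes "\<And>a::'k::alg_closed_field. a \<noteq> 0 \<Longrightarrow> a powi m = a powi n"
  shows "m = n"
proof -
  have "a ^ nat \<bar>m - n\<bar> = 1" if a: "a \<noteq> 0" for a :: 'k
  proof -
    have "a powi (m - n) = 1" using assms a by (simp add: power_int_diff)
    thus ?thesis by (cases "m - n \<ge> 0") (auto simp: power_int_def power_inverse split: if_splits)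
  qed
  from power_identity_exponent[OF this] show ?thesis by simp
qed

text \<open>Powers of the Frobenius are injective: b^(p^t) = a^(p^t) implies (b - a)^(p^t) = 0.\<close>
lemma char_power_inj:
  fixes a b :: "'k::idom"
  assumes "CHAR('k) > 0" and "e = CHAR('k) ^ t" and "b ^ e = a ^ e"
  shows "b = a"
proof -
  have "prime CHAR('k)" using assms(1) prime_CHAR_semidom by blast
  hence "((b - a) + a) ^ e = (b - a) ^ e + a ^ e" using assms(2) by (rule freshmans_dream')
  hence "(b - a) ^ e = 0" using assms(3) by simp
  thus ?thesis by simp
qed

lemma pfun_polynomial_on_curve:
  assumes "f \<in> pfun gens" and "\<And>\<gamma>. \<gamma> \<in> gens \<Longrightarrow> polyfun (\<lambda>t. \<gamma> (L t))"
  shows "polyfun (\<lambda>t. f (L t))"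
  using assms(1)
proof induction
  case (gen f) thus ?case using assms(2) by blast
next
  case (const c) show ?case unfolding polyfun_def by (intro exI[of _ "[:c:]"]) simp
next
  case (add f g)
  then obtain p q where "\<And>t. f (L t) = poly p t" "\<And>t. g (L t) = poly q t"
    unfolding polyfun_def by blast
  thus ?case unfolding polyfun_def by (intro exI[of _ "p + q"]) simp
next
  case (mul f g)
  then obtain p q where "\<And>t. f (L t) = poly p t" "\<And>t. g (L t) = poly q t"
    unfolding polyfun_def by blast
  thus ?case unfolding polyfun_def by (intro exI[of _ "p * q"]) simp
qed

text \<open>The same with Laurent polynomials (written as p(t) / t^N) on a set S.\<close>
lemma pfun_laurent_on_curve:
  assumes "f \<in> pfun gens" and "\<And>\<gamma>. \<gamma> \<in> gens \<Longrightarrow> \<exists>p N. \<forall>t\<in>S. \<gamma> (L t) * t ^ N = poly p t"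
  shows "\<exists>p N. \<forall>t\<in>S. f (L t) * t ^ N = poly p t"
  using assms(1)
proof induction
  case (gen f) thus ?case using assms(2) by blast
next
  case (const c) show ?case by (intro exI[of _ "[:c:]"] exI[of _ 0]) simp
next
  case (add f g)
  then obtain p q N M where f: "\<forall>t\<in>S. f (L t) * t ^ N = poly p t"
    and g: "\<forall>t\<in>S. g (L t) * t ^ M = poly q t" by blast
  have "(f (L t) + g (L t)) * t ^ (N + M) = (f (L t) * t ^ N) * t ^ M + (g (L t) * t ^ M) * t ^ N" for t
    by (simp add: power_add algebra_simps)
  hence "\<forall>t\<in>S. (f (L t) + g (L t)) * t ^ (N + M) = poly (p * monom 1 M + q * monom 1 N) t"
    using f g by (simp add: poly_monom)
  thus ?case by blast
next
  case (mul f g)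
  then obtain p q N M where f: "\<forall>t\<in>S. f (L t) * t ^ N = poly p t"
    and g: "\<forall>t\<in>S. g (L t) * t ^ M = poly q t" by blast
  have "\<forall>t\<in>S. (f (L t) * g (L t)) * t ^ (N + M) = poly (p * q) t"
  proof
    fix t assume "t \<in> S"
    have "(f (L t) * g (L t)) * t ^ (N + M) = (f (L t) * t ^ N) * (g (L t) * t ^ M)"
      by (simp add: power_add mult_ac)
    thus "(f (L t) * g (L t)) * t ^ (N + M) = poly (p * q) t" using \<open>t \<in> S\<close> f g by simp
  qed
  thus ?case by blast
qed

lemma Gregular_on_line:
  assumes "q \<in> (Gregular :: ((('k::field \<times> 'k \<times> 'k) \<times> 'k) \<Rightarrow> 'k) set)"
  shows "polyfun (\<lambda>t. q ((t * u1, t * u2, t * u3), 1))"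
proof -
  have scale: "polyfun (\<lambda>t. t * u)" for u :: 'k
    unfolding polyfun_def by (intro exI[of _ "[:0, u:]"]) (simp add: mult.commute)
  have one: "polyfun (\<lambda>t. 1 :: 'k)" unfolding polyfun_def by (intro exI[of _ "[:1:]"]) simp
  show ?thesis using assms unfolding Gregular_def
    by (rule pfun_polynomial_on_curve) (auto simp: scale one)
qed

lemma Gregular_on_torus:
  assumes "q \<in> (Gregular :: ((('k::field \<times> 'k \<times> 'k) \<times> 'k) \<Rightarrow> 'k) set)"
  shows "\<exists>p N. \<forall>t\<in>{t. t \<noteq> 0}. q ((0, 0, 0), t) * t ^ N = poly p t"
proof -
  have zero: "\<exists>p. \<forall>t::'k. t \<noteq> 0 \<longrightarrow> poly p t = 0"
    by (intro exI[of _ 0]) simp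
  have ident: "\<exists>p N. \<forall>t::'k. t \<noteq> 0 \<longrightarrow> t * t ^ N = poly p t"
    by (intro exI[of _ "[:0, 1:]"] exI[of _ 0]) simp
  have inv: "\<exists>p N. \<forall>t::'k. t \<noteq> 0 \<longrightarrow> inverse t * t ^ N = poly p t"
    by (intro exI[of _ "[:1:]"] exI[of _ 1]) simp
  show ?thesis using assms unfolding Gregular_def
    by (rule pfun_laurent_on_curve) (auto simp: zero ident inv)
qed

lemma Gmorph_carrier: "Gmorph F \<Longrightarrow> g \<in> Gcarrier \<Longrightarrow> F g \<in> Gcarrier"
  unfolding Gmorph_def by blast

lemma Gmorph_coordinate:
  fixes F :: "(('k::field \<times> 'k \<times> 'k) \<times> 'k) \<Rightarrow> (('k \<times> 'k \<times> 'k) \<times> 'k)"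
  assumes "Gmorph F"
    and "c \<in> {\<lambda>g. fst (fst g), \<lambda>g. fst (snd (fst g)), \<lambda>g. snd (snd (fst g)), \<lambda>g. snd g}"
  obtains q where "q \<in> Gregular" and "\<And>g. g \<in> Gcarrier \<Longrightarrow> c (F g) = q g"
proof -
  have "\<forall>c \<in> {\<lambda>g. fst (fst g), \<lambda>g. fst (snd (fst g)), \<lambda>g. snd (snd (fst g)), \<lambda>g. snd g}.
          \<exists>q \<in> Gregular. \<forall>g \<in> Gcarrier. c (F g) = (q g :: 'k)"
    using assms(1) unfolding Gmorph_def by (rule conjunct2)
  from bspec[OF this assms(2)] show ?thesis using that by blast
qed

lemma Gmorph_on_line:
  fixes F :: "(('k::field \<times> 'k \<times> 'k) \<times> 'k) \<Rightarrow> (('k \<times> 'k \<times> 'k) \<times> 'k)"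
  assumes "Gmorph F"
    and "c \<in> {\<lambda>g. fst (fst g), \<lambda>g. fst (snd (fst g)), \<lambda>g. snd (snd (fst g)), \<lambda>g. snd g}"
  shows "polyfun (\<lambda>t. c (F ((t * u1, t * u2, t * u3), 1)))"
proof -
  obtain q where q: "q \<in> Gregular" "\<And>g. g \<in> Gcarrier \<Longrightarrow> c (F g) = q g"
    by (rule Gmorph_coordinate[OF assms]) blast
  have "c (F ((t * u1, t * u2, t * u3), 1)) = q ((t * u1, t * u2, t * u3), 1)" for t
    by (rule q(2)) (simp add: Gcarrier_def)
  thus ?thesis using Gregular_on_line[OF q(1)] by simp
qed

lemma Gmorph_on_torus:
  fixes F :: "(('k::field \<times> 'k \<times> 'k) \<times> 'k) \<Rightarrow> (('k \<times> 'k \<times> 'k) \<times> 'k)"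
  assumes "Gmorph F"
  shows "\<exists>p N. \<forall>t. t \<noteq> 0 \<longrightarrow> snd (F ((0, 0, 0), t)) * t ^ N = poly p t"
proof -
  obtain q where q: "q \<in> Gregular" "\<And>g. g \<in> Gcarrier \<Longrightarrow> snd (F g) = q g"
    by (rule Gmorph_coordinate[OF assms, where c = "\<lambda>g. snd g"]) (simp, blast)
  have "t \<noteq> 0 \<Longrightarrow> snd (F ((0, 0, 0), t)) = q ((0, 0, 0), t)" for t
    by (rule q(2)) (simp add: Gcarrier_def)
  thus ?thesis using Gregular_on_torus[OF q(1)] by simp
qed

text \<open>The cocycles vanish on the coordinate axes; this makes the axes of U subgroups and
  gives the simple multiplication rules used below.\<close>
lemma beta_on_axes:
  assumes "admissible TYPE('k::field) d"
  shows "beta d (0::'k) y = 0" and "beta d x (0::'k) = 0"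
proof -
  have "d_bk d \<in> {Bsum, Bmono} \<Longrightarrow> CHAR('k) > 0" and "d_bk d = TypeB \<Longrightarrow> CHAR('k) > 2"
    using assms by (auto simp: admissible_def)
  hence "beta d (0::'k) y = 0 \<and> beta d x (0::'k) = 0"
    by (cases "d_bk d") (auto simp: beta_def Let_def power_0_left intro!: sum.neutral)
  thus "beta d (0::'k) y = 0" and "beta d x (0::'k) = 0" by simp_all
qed

lemma psi2_on_axes:
  assumes "admissible TYPE('k::field) d"
  shows "psi2 d (0::'k) y = 0" and "psi2 d x (0::'k) = 0"
  using assms by (auto simp: psi2_def admissible_def)

lemma h_pos: "h2 T d > 0" "h3 T d > 0"
  by (simp_all add: h2_def h3_def hexp_def)

lemma psi1_special:
  assumes "admissible TYPE('k::field) d"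
  shows "psi1 d (0::'k) y2 y3 = 0"
    and "psi1 d (x::'k) y2 0 = y2 ^ h2 TYPE('k) d * x ^ h3 TYPE('k) d"
    and "psi1 d (x::'k) 0 y3 = beta d x y3"
  using beta_on_axes[OF assms] h_pos[of "TYPE('k)" d] by (simp_all add: psi1_def)

lemma Gmult_unipotent:
  "Gmult d ((x1, x2, x3), 1) ((y1, y2, y3), 1) =
     ((x1 + y1 + psi1 d x3 y2 y3, x2 + y2 + psi2 d x3 y3, x3 + (y3::'k::field)), 1)"
  by (simp add: Gmult_def mult3_def tact_def)

lemma Gmult_closed:
  "g \<in> Gcarrier \<Longrightarrow> h \<in> Gcarrier \<Longrightarrow> Gmult d g h \<in> (Gcarrier :: (('k::field \<times> 'k \<times> 'k) \<times> 'k) set)"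
  by (auto simp: Gcarrier_def Gmult_def split: prod.splits)

text \<open>Group elements mapping every block (horizontal line) to itself, and elements of the
  kernel of the action; both notions are intrinsic to the permutation group.\<close>
definition preserves_blocks :: "gdata \<Rightarrow> (('k::field \<times> 'k \<times> 'k) \<times> 'k) \<Rightarrow> bool" where
  "preserves_blocks d g \<longleftrightarrow> (\<forall>P. snd (Gact d g P) = snd P)"

definition acts_trivially :: "gdata \<Rightarrow> (('k::field \<times> 'k \<times> 'k) \<times> 'k) \<Rightarrow> bool" where
  "acts_trivially d g \<longleftrightarrow> (\<forall>P. Gact d g P = P)"

lemma block_map_same_block:
  fixes \<Phi> :: "'a \<times> 'b \<Rightarrow> 'c \<times> 'd"
  assumes inj: "inj \<Phi>" and blocks: "\<And>c. \<exists>c'. \<Phi> ` {P. snd P = c} = {P. snd P = c'}"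
  shows "snd (\<Phi> P) = snd (\<Phi> Q) \<longleftrightarrow> snd P = snd Q"
proof -
  have image_block: "\<Phi> ` {R. snd R = snd S} = {R. snd R = snd (\<Phi> S)}" for S
  proof -
    obtain c' where c': "\<Phi> ` {R. snd R = snd S} = {R. snd R = c'}" using blocks by blast
    have "\<Phi> S \<in> \<Phi> ` {R. snd R = snd S}" by simp
    hence "c' = snd (\<Phi> S)" unfolding c' by simp
    thus ?thesis using c' by simp
  qed
  have "snd (\<Phi> P) = snd (\<Phi> Q) \<longleftrightarrow> \<Phi> ` {R. snd R = snd P} = \<Phi> ` {R. snd R = snd Q}"
    unfolding image_block by (auto simp: set_eq_iff)
  also have "\<dots> \<longleftrightarrow> {R. snd R = snd P} = {R :: 'a \<times> 'b. snd R = snd Q}"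
    using inj by (simp add: inj_image_eq_iff)
  also have "\<dots> \<longleftrightarrow> snd P = snd Q" by (auto simp: set_eq_iff)
  finally show ?thesis .
qed

lemma alg_perm_iso_transports_action:
  assumes iso: "alg_perm_iso TYPE('k::field) d d' \<Phi>1 \<Phi>2" and g: "g \<in> Gcarrier"
  shows "preserves_blocks d' (\<Phi>1 g) = preserves_blocks d g"
    and "acts_trivially d' (\<Phi>1 g) = acts_trivially d g"
proof -
  have inj: "inj \<Phi>2" and surj: "surj \<Phi>2" using iso by (auto simp: alg_perm_iso_def bij_def)
  have blocks: "\<And>c. \<exists>c'. \<Phi>2 ` {P. snd P = c} = {P. snd P = c'}" using iso by (simp add: alg_perm_iso_def)
  have equiv: "\<Phi>2 (Gact d g P) = Gact d' (\<Phi>1 g) (\<Phi>2 P)" for P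
    using iso g unfolding alg_perm_iso_def by blast
  have "preserves_blocks d' (\<Phi>1 g) \<longleftrightarrow> (\<forall>P. snd (Gact d' (\<Phi>1 g) (\<Phi>2 P)) = snd (\<Phi>2 P))"
    unfolding preserves_blocks_def using surj by (metis surjD)
  also have "\<dots> \<longleftrightarrow> (\<forall>P. snd (\<Phi>2 (Gact d g P)) = snd (\<Phi>2 P))" by (simp add: equiv)
  also have "\<dots> \<longleftrightarrow> preserves_blocks d g"
    unfolding preserves_blocks_def using block_map_same_block[OF inj blocks] by simp
  finally show "preserves_blocks d' (\<Phi>1 g) = preserves_blocks d g" .
  have "acts_trivially d' (\<Phi>1 g) \<longleftrightarrow> (\<forall>P. Gact d' (\<Phi>1 g) (\<Phi>2 P) = \<Phi>2 P)"
    unfolding acts_trivially_def using surj by (metis surjD)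
  also have "\<dots> \<longleftrightarrow> (\<forall>P. \<Phi>2 (Gact d g P) = \<Phi>2 P)" by (simp add: equiv)
  also have "\<dots> \<longleftrightarrow> acts_trivially d g" unfolding acts_trivially_def using inj by (simp add: inj_eq)
  finally show "acts_trivially d' (\<Phi>1 g) = acts_trivially d g" .
qed

definition axis1 :: "((('k::field \<times> 'k \<times> 'k) \<times> 'k) \<Rightarrow> (('k \<times> 'k \<times> 'k) \<times> 'k)) \<Rightarrow> 'k \<Rightarrow> 'k" where
  "axis1 F t = fst (fst (F ((t, 0, 0), 1)))"

definition axis2 :: "((('k::field \<times> 'k \<times> 'k) \<times> 'k) \<Rightarrow> (('k \<times> 'k \<times> 'k) \<times> 'k)) \<Rightarrow> 'k \<Rightarrow> 'k" where
  "axis2 F t = fst (snd (fst (F ((0, t, 0), 1))))"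

definition axis3 :: "((('k::field \<times> 'k \<times> 'k) \<times> 'k) \<Rightarrow> (('k \<times> 'k \<times> 'k) \<times> 'k)) \<Rightarrow> 'k \<Rightarrow> 'k" where
  "axis3 F t = snd (snd (fst (F ((0, 0, t), 1))))"

definition torus_char :: "((('k::field \<times> 'k \<times> 'k) \<times> 'k) \<Rightarrow> (('k \<times> 'k \<times> 'k) \<times> 'k)) \<Rightarrow> 'k \<Rightarrow> 'k" where
  "torus_char F a = snd (F ((0, 0, 0), a))"

lemma axes_polynomial:
  fixes F :: "(('k::field \<times> 'k \<times> 'k) \<times> 'k) \<Rightarrow> (('k \<times> 'k \<times> 'k) \<times> 'k)"
  assumes "Gmorph F"
  shows "polyfun (axis1 F)" and "polyfun (axis2 F)" and "polyfun (axis3 F)"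
  using Gmorph_on_line[OF assms, of "\<lambda>g. fst (fst g)" 1 0 0]
    Gmorph_on_line[OF assms, of "\<lambda>g. fst (snd (fst g))" 0 1 0]
    Gmorph_on_line[OF assms, of "\<lambda>g. snd (snd (fst g))" 0 0 1]
  by (simp_all add: axis1_def [abs_def] axis2_def [abs_def] axis3_def [abs_def])

text \<open>The setting is symmetric
  (lemma swap), so every result also holds for G.\<close>
locale perm_iso =
  fixes d d' :: gdata
    and F G :: "(('k::alg_closed_field \<times> 'k \<times> 'k) \<times> 'k) \<Rightarrow> (('k \<times> 'k \<times> 'k) \<times> 'k)"
  assumes adm: "admissible TYPE('k) d" and adm': "admissible TYPE('k) d'"
    and hom: "\<And>g h. g \<in> Gcarrier \<Longrightarrow> h \<in> Gcarrier \<Longrightarrow> F (Gmult d g h) = Gmult d' (F g) (F h)"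
    and left_inv: "\<And>g. g \<in> Gcarrier \<Longrightarrow> G (F g) = g"
    and right_inv: "\<And>g. g \<in> Gcarrier \<Longrightarrow> F (G g) = g"
    and F_morph: "Gmorph F" and G_morph: "Gmorph G"
    and blocks: "\<And>g. g \<in> Gcarrier \<Longrightarrow> preserves_blocks d' (F g) = preserves_blocks d g"
    and kernel: "\<And>g. g \<in> Gcarrier \<Longrightarrow> acts_trivially d' (F g) = acts_trivially d g"
begin

lemma swap: "perm_iso d' d G F"
proof
  fix g h :: "('k \<times> 'k \<times> 'k) \<times> 'k" assume g: "g \<in> Gcarrier" and h: "h \<in> Gcarrier"
  have Gg: "G g \<in> Gcarrier" and Gh: "G h \<in> Gcarrier" using g h G_morph by (simp_all add: Gmorph_carrier)
  have "Gmult d' g h = F (Gmult d (G g) (G h))" using hom[OF Gg Gh] g h by (simp add: right_inv)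
  thus "G (Gmult d' g h) = Gmult d (G g) (G h)" using left_inv Gmult_closed[OF Gg Gh] by simp
  show "preserves_blocks d (G g) = preserves_blocks d' g" using blocks[OF Gg] g by (simp add: right_inv)
  show "acts_trivially d (G g) = acts_trivially d' g" using kernel[OF Gg] g by (simp add: right_inv)
qed (use adm adm' left_inv right_inv F_morph G_morph in auto)

lemmas vanish = psi1_special(1)[OF adm] psi1_special(1)[OF adm']
  psi2_on_axes[OF adm] psi2_on_axes[OF adm'] beta_on_axes[OF adm] beta_on_axes[OF adm']

lemma unipotent_in_carrier: "((u, 1) :: ('k \<times> 'k \<times> 'k) \<times> 'k) \<in> Gcarrier"
  by (simp add: Gcarrier_def)

text \<open>F(1) is an idempotent of G_d', hence the identity.\<close>
lemma F_identity: "F ((0, 0, 0), 1) = ((0, 0, 0), 1)"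
proof -
  obtain x1 x2 x3 b where Fe: "F ((0, 0, 0), 1) = ((x1, x2, x3), b)" by (metis prod.collapse)
  have b0: "b \<noteq> 0" using Gmorph_carrier[OF F_morph unipotent_in_carrier, of "(0, 0, 0)"] Fe
    by (simp add: Gcarrier_def)
  have "Gmult d ((0, 0, 0), 1) ((0, 0, 0), (1::'k)) = ((0, 0, 0), 1)"
    by (simp add: Gmult_unipotent vanish)
  hence "F ((0, 0, 0), 1) = Gmult d' (F ((0, 0, 0), 1)) (F ((0, 0, 0), 1))"
    using hom[OF unipotent_in_carrier unipotent_in_carrier] by metis
  hence eq: "((x1, x2, x3), b) = (mult3 d' (x1, x2, x3) (tact d' b (x1, x2, x3)), b * b)"
    using Fe by (simp add: Gmult_def)
  hence "b = 1" using b0 by (metis mult_cancel_left2 prod.inject)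
  with eq have eq1: "((x1, x2, x3), b) = ((x1 + x1 + psi1 d' x3 x2 x3, x2 + x2 + psi2 d' x3 x3, x3 + x3), 1)"
    by (simp add: mult3_def tact_def)
  have idem: "y + y = y \<Longrightarrow> y = 0" for y :: 'k
    using add_left_imp_eq[of y y 0] by simp
  from eq1 have "x3 = 0" by (intro idem) simp
  with eq1 have "x1 + x1 = x1" "x2 + x2 = x2" by (simp_all add: vanish)
  hence "x1 = 0" "x2 = 0" using idem by blast+
  with Fe \<open>x3 = 0\<close> \<open>b = 1\<close> show ?thesis by simp
qed

text \<open>F maps the unipotent radical into itself: along any line through the identity,
  the torus coordinate of F is a nowhere vanishing polynomial, hence constant.\<close>
lemma unipotent_image: obtains x1 x2 x3 where "F (u, 1) = ((x1, x2, x3), 1)"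
proof -
  obtain u1 u2 u3 where u: "u = (u1, u2, u3)" by (metis prod.collapse)
  let ?f = "\<lambda>t. snd (F ((t * u1, t * u2, t * u3), 1))"
  have "polyfun ?f" by (rule Gmorph_on_line[OF F_morph]) simp
  moreover have "?f t \<noteq> 0" for t
    using Gmorph_carrier[OF F_morph unipotent_in_carrier] by (simp add: Gcarrier_def)
  ultimately have "?f 1 = ?f 0" by (rule polyfun_nonvanishing_const)
  hence "snd (F (u, 1)) = 1" using u by (simp add: F_identity)
  thus ?thesis using that by (metis prod.collapse)
qed

text \<open>Elements (u1, u2, 0) of U preserve every block; so do their images under F, which
  therefore have third coordinate 0.\<close>
lemma F_third_zero: "snd (snd (fst (F ((u1, u2, 0), 1)))) = 0"
proof -
  have "preserves_blocks d ((u1, u2, 0), (1::'k))"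
    by (simp add: preserves_blocks_def Gact_def split: prod.splits)
  hence pb: "preserves_blocks d' (F ((u1, u2, 0), 1))" using blocks[OF unipotent_in_carrier] by simp
  obtain x1 x2 x3 where Fx: "F ((u1, u2, 0), 1) = ((x1, x2, x3), 1)" by (rule unipotent_image)
  from pb have "snd (Gact d' ((x1, x2, x3), 1) (0, 0)) = 0" unfolding Fx preserves_blocks_def by (metis snd_conv)
  hence "x3 = 0" by (simp add: Gact_def)
  thus ?thesis using Fx by simp
qed

text \<open>Writing F(0,0,t) = (x1,x2,0)(0,0,x3) and applying G shows that axis3 G inverts axis3 F.\<close>
lemma axis3_inverse: "axis3 G (axis3 F t) = t"
proof -
  obtain x1 x2 x3 where Fx: "F ((0, 0, t), 1) = ((x1, x2, x3), 1)" by (rule unipotent_image)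
  have split: "((x1, x2, x3), (1::'k)) = Gmult d' ((x1, x2, 0), 1) ((0, 0, x3), 1)"
    by (simp add: Gmult_unipotent vanish)
  have "((0, 0, t), (1::'k)) = G (F ((0, 0, t), 1))" using left_inv[OF unipotent_in_carrier] by simp
  also have "\<dots> = Gmult d (G ((x1, x2, 0), 1)) (G ((0, 0, x3), 1))"
    using Fx split perm_iso.hom[OF swap unipotent_in_carrier unipotent_in_carrier] by simp
  finally have eq: "((0, 0, t), (1::'k)) = Gmult d (G ((x1, x2, 0), 1)) (G ((0, 0, x3), 1))" .
  obtain a1 a2 a3 where Ga: "G ((x1, x2, 0), 1) = ((a1, a2, a3), 1)"
    by (rule perm_iso.unipotent_image[OF swap])
  have "a3 = 0" using perm_iso.F_third_zero[OF swap, of x1 x2] Ga by simp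
  obtain b1 b2 b3 where Gb: "G ((0, 0, x3), 1) = ((b1, b2, b3), 1)"
    by (rule perm_iso.unipotent_image[OF swap])
  have "b3 = axis3 G x3" using Gb by (simp add: axis3_def)
  with eq Ga Gb \<open>a3 = 0\<close> have "t = axis3 G x3" by (simp add: Gmult_unipotent)
  thus ?thesis using Fx by (simp add: axis3_def)
qed

lemma axis3_linear: "\<exists>c. c \<noteq> 0 \<and> (\<forall>t. axis3 F t = c * t)"
proof (rule polyfun_inverse_linear)
  show "polyfun (axis3 F)" "polyfun (axis3 G)" using F_morph G_morph by (simp_all add: axes_polynomial)
  show "axis3 F (axis3 G t) = t" for t by (rule perm_iso.axis3_inverse[OF swap])
  show "axis3 F 0 = 0" by (simp add: axis3_def F_identity)
qed

text \<open>The elements (0, s, 0) form the kernel of the action on the plane, so F maps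
  them to elements of the same shape.\<close>
lemma F_kernel: "F ((0, s, 0), 1) = ((0, axis2 F s, 0), 1)"
proof -
  have "acts_trivially d ((0, s, 0), (1::'k))"
    by (simp add: acts_trivially_def Gact_def vanish split: prod.splits)
  hence triv: "acts_trivially d' (F ((0, s, 0), 1))" using kernel[OF unipotent_in_carrier] by simp
  obtain x1 x2 x3 where Fx: "F ((0, s, 0), 1) = ((x1, x2, x3), 1)" by (rule unipotent_image)
  from triv have fix0: "Gact d' ((x1, x2, x3), 1) (0, 0) = (0, 0)" unfolding Fx acts_trivially_def by blast
  hence "x3 = 0" by (simp add: Gact_def)
  with fix0 have "x1 = 0" by (simp add: Gact_def vanish psi1_special(3)[OF adm'])
  thus ?thesis using Fx \<open>x3 = 0\<close> by (simp add: axis2_def)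
qed

lemma axis2_inverse: "axis2 G (axis2 F s) = s"
proof -
  have "((0, s, 0), (1::'k)) = G (F ((0, s, 0), 1))" using left_inv[OF unipotent_in_carrier] by simp
  also have "\<dots> = ((0, axis2 G (axis2 F s), 0), 1)" using F_kernel perm_iso.F_kernel[OF swap] by simp
  finally show ?thesis by simp
qed

lemma axis2_linear: "\<exists>c. c \<noteq> 0 \<and> (\<forall>t. axis2 F t = c * t)"
proof (rule polyfun_inverse_linear)
  show "polyfun (axis2 F)" "polyfun (axis2 G)" using F_morph G_morph by (simp_all add: axes_polynomial)
  show "axis2 F (axis2 G t) = t" for t by (rule perm_iso.axis2_inverse[OF swap])
  show "axis2 F 0 = 0" by (simp add: axis2_def F_identity)
qed

text \<open>The key identity: (0,0,t)(0,s,0) = (s^h2 t^h3, 0, 0)(0,s,0)(0,0,t), so F transports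
  the commutator term s^h2 t^h3 of d into the commutator term of d'.\<close>
lemma F_commutator:
  "F ((s ^ h2 TYPE('k) d * t ^ h3 TYPE('k) d, 0, 0), 1)
     = (((axis2 F s) ^ h2 TYPE('k) d' * (axis3 F t) ^ h3 TYPE('k) d', 0, 0), 1)"
proof -
  define c where "c = s ^ h2 TYPE('k) d * t ^ h3 TYPE('k) d"
  have left: "Gmult d ((0, 0, t), 1) ((0, s, 0), 1) = ((c, s, t), (1::'k))"
    by (simp add: Gmult_unipotent vanish psi1_special(2)[OF adm] c_def)
  have right: "Gmult d ((c, 0, 0), 1) (Gmult d ((0, s, 0), 1) ((0, 0, t), 1)) = ((c, s, t), (1::'k))"
    by (simp add: Gmult_unipotent vanish)
  obtain x1 x2 x3 where Ft: "F ((0, 0, t), 1) = ((x1, x2, x3), 1)" by (rule unipotent_image)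
  have x3: "x3 = axis3 F t" using Ft by (simp add: axis3_def)
  obtain y1 y2 y3 where Fc: "F ((c, 0, 0), 1) = ((y1, y2, y3), 1)" by (rule unipotent_image)
  have "F ((c, s, t), 1) = Gmult d' (F ((0, 0, t), 1)) (F ((0, s, 0), 1))"
    using hom[OF unipotent_in_carrier unipotent_in_carrier] left by metis
  also have "\<dots> = ((x1 + (axis2 F s) ^ h2 TYPE('k) d' * x3 ^ h3 TYPE('k) d', x2 + axis2 F s, x3), 1)"
    by (simp add: Ft F_kernel Gmult_unipotent vanish psi1_special(2)[OF adm'])
  finally have L: "F ((c, s, t), 1) = ((x1 + (axis2 F s) ^ h2 TYPE('k) d' * x3 ^ h3 TYPE('k) d', x2 + axis2 F s, x3), 1)" .
  have "F ((c, s, t), 1) = Gmult d' (F ((c, 0, 0), 1)) (Gmult d' (F ((0, s, 0), 1)) (F ((0, 0, t), 1)))"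
    using hom[OF unipotent_in_carrier unipotent_in_carrier] right by (metis Gmult_unipotent)
  also have "\<dots> = Gmult d' ((y1, y2, y3), 1) ((x1, axis2 F s + x2, x3), 1)"
    by (simp add: Ft Fc F_kernel Gmult_unipotent vanish)
  finally have R: "F ((c, s, t), 1) = Gmult d' ((y1, y2, y3), 1) ((x1, axis2 F s + x2, x3), 1)" .
  from L R have "y3 = 0" by (simp add: Gmult_unipotent)
  with L R have "y1 = (axis2 F s) ^ h2 TYPE('k) d' * x3 ^ h3 TYPE('k) d'" "y2 = 0"
    by (simp_all add: Gmult_unipotent vanish)
  thus ?thesis using Fc x3 \<open>y3 = 0\<close> by (simp add: c_def)
qed

text \<open>Every c is a commutator term 1^h2 t^h3 (t an h3-th root of c), so F preserves the
  first axis.\<close>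
lemma F_axis1: "F ((c, 0, 0), 1) = ((axis1 F c, 0, 0), 1)"
proof -
  obtain t where "t ^ h3 TYPE('k) d = c" using nth_root_exists[OF h_pos(2)] by blast
  hence "F ((c, 0, 0), 1) = F ((1 ^ h2 TYPE('k) d * t ^ h3 TYPE('k) d, 0, 0), 1)" by simp
  also have "\<dots> = (((axis2 F 1) ^ h2 TYPE('k) d' * (axis3 F t) ^ h3 TYPE('k) d', 0, 0), 1)"
    by (rule F_commutator)
  finally show ?thesis by (simp add: axis1_def)
qed

lemma axis1_inverse: "axis1 G (axis1 F c) = c"
proof -
  have "((c, 0, 0), (1::'k)) = G (F ((c, 0, 0), 1))" using left_inv[OF unipotent_in_carrier] by simp
  also have "\<dots> = ((axis1 G (axis1 F c), 0, 0), 1)" using F_axis1 perm_iso.F_axis1[OF swap] by simp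
  finally show ?thesis by simp
qed

lemma axis1_linear: "\<exists>c. c \<noteq> 0 \<and> (\<forall>t. axis1 F t = c * t)"
proof (rule polyfun_inverse_linear)
  show "polyfun (axis1 F)" "polyfun (axis1 G)" using F_morph G_morph by (simp_all add: axes_polynomial)
  show "axis1 F (axis1 G t) = t" for t by (rule perm_iso.axis1_inverse[OF swap])
  show "axis1 F 0 = 0" by (simp add: axis1_def F_identity)
qed

text \<open>With all three axis maps linear, the commutator identity becomes an identity of
  monomials k s^h2 t^h3 = c (s^h2' t^h3'), forcing equal exponents.\<close>
lemma h_eq: "h2 TYPE('k) d' = h2 TYPE('k) d" "h3 TYPE('k) d' = h3 TYPE('k) d"
proof -
  obtain a2 where a2: "\<forall>t. axis2 F t = a2 * t" using axis2_linear by blast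
  obtain a3 where a3: "\<forall>t. axis3 F t = a3 * t" using axis3_linear by blast
  obtain k where k: "k \<noteq> 0" "\<forall>t. axis1 F t = k * t" using axis1_linear by blast
  define k' where "k' = a2 ^ h2 TYPE('k) d' * a3 ^ h3 TYPE('k) d'"
  have monomials: "k * (s ^ h2 TYPE('k) d * t ^ h3 TYPE('k) d)
                   = k' * (s ^ h2 TYPE('k) d' * t ^ h3 TYPE('k) d')" for s t
    using F_commutator[of s t] F_axis1[of "s ^ h2 TYPE('k) d * t ^ h3 TYPE('k) d"] a2 a3 k
    by (simp add: k'_def power_mult_distrib mult_ac)
  have "k * t ^ h3 TYPE('k) d = k' * t ^ h3 TYPE('k) d'" for t using monomials[of 1 t] by simp
  thus "h3 TYPE('k) d' = h3 TYPE('k) d" using monomial_exponent_unique k(1) by metis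
  have "k * s ^ h2 TYPE('k) d = k' * s ^ h2 TYPE('k) d'" for s using monomials[of s 1] by simp
  thus "h2 TYPE('k) d' = h2 TYPE('k) d" using monomial_exponent_unique k(1) by metis
qed

text \<open>In G, the torus element a conjugates v to tact d a v.  Applying F to
  a v = (tact d a v) a on the second and third axes gives the action of the character
  torus_char F on the axes of d'.\<close>
lemma torus_conjugation:
  assumes a: "a \<noteq> 0"
  shows "axis3 F (a ^ d_e3 d * t) = torus_char F a ^ d_e3 d' * axis3 F t"
    and "axis2 F (a powi d_e2 d * s) = torus_char F a powi d_e2 d' * axis2 F s"
proof -
  have aC: "((0, 0, 0), a) \<in> (Gcarrier :: (('k \<times> 'k \<times> 'k) \<times> 'k) set)" using a by (simp add: Gcarrier_def)
  have conj: "Gmult d ((0, 0, 0), a) (v, 1) = Gmult d (tact d a v, 1) ((0, 0, 0), a)" for v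
    by (cases v) (simp add: Gmult_def mult3_def tact_def vanish psi1_special(3)[OF adm])
  have key: "Gmult d' (F ((0, 0, 0), a)) (F (v, 1)) = Gmult d' (F (tact d a v, 1)) (F ((0, 0, 0), a))" for v
  proof -
    have "Gmult d' (F ((0, 0, 0), a)) (F (v, 1)) = F (Gmult d ((0, 0, 0), a) (v, 1))"
      by (rule hom[OF aC unipotent_in_carrier, symmetric])
    also have "\<dots> = F (Gmult d (tact d a v, 1) ((0, 0, 0), a))" by (simp only: conj)
    also have "\<dots> = Gmult d' (F (tact d a v, 1)) (F ((0, 0, 0), a))"
      by (rule hom[OF unipotent_in_carrier aC])
    finally show ?thesis .
  qed
  obtain w1 w2 w3 b where Fa: "F ((0, 0, 0), a) = ((w1, w2, w3), b)" by (metis prod.collapse)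
  obtain x1 x2 x3 where Fx: "F ((0, 0, t), 1) = ((x1, x2, x3), 1)" by (rule unipotent_image)
  obtain z1 z2 z3 where Fz: "F ((0, 0, a ^ d_e3 d * t), 1) = ((z1, z2, z3), 1)" by (rule unipotent_image)
  have "tact d a (0, 0, t) = (0, 0, a ^ d_e3 d * t)" by (simp add: tact_def)
  with key[of "(0, 0, t)"] Fa Fx Fz have "w3 + b ^ d_e3 d' * x3 = z3 + w3"
    by (simp add: Gmult_def mult3_def tact_def)
  thus "axis3 F (a ^ d_e3 d * t) = torus_char F a ^ d_e3 d' * axis3 F t"
    using Fx Fz Fa by (simp add: axis3_def torus_char_def)
  have "tact d a (0, s, 0) = (0, a powi d_e2 d * s, 0)" by (simp add: tact_def)
  with key[of "(0, s, 0)"] Fa have "w2 + b powi d_e2 d' * axis2 F s = axis2 F (a powi d_e2 d * s) + w2"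
    by (simp add: Gmult_def mult3_def tact_def F_kernel vanish)
  thus "axis2 F (a powi d_e2 d * s) = torus_char F a powi d_e2 d' * axis2 F s"
    using Fa by (simp add: torus_char_def)
qed

text \<open>Evaluating the conjugation formulas at the point 1 of the (linear) axes.\<close>
lemma torus_char_powers:
  assumes "a \<noteq> 0"
  shows "torus_char F a ^ d_e3 d' = a ^ d_e3 d"
    and "torus_char F a powi d_e2 d' = a powi d_e2 d"
proof -
  obtain a3 where "a3 \<noteq> 0" "\<forall>t. axis3 F t = a3 * t" using axis3_linear by blast
  thus "torus_char F a ^ d_e3 d' = a ^ d_e3 d" using torus_conjugation(1)[OF assms, of 1] by simp
  obtain a2 where "a2 \<noteq> 0" "\<forall>t. axis2 F t = a2 * t" using axis2_linear by blast
  thus "torus_char F a powi d_e2 d' = a powi d_e2 d" using torus_conjugation(2)[OF assms, of 1] by simp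
qed

lemma e3_pos: "d_e3 d > 0"
  using adm by (auto simp: admissible_def split: if_splits)

text \<open>torus_char F is a Laurent polynomial P(a)/a^N; raising to the power e3' gives the
  monomial a^e3, so e3' divides e3.\<close>
lemma e3_dvd: "d_e3 d' dvd d_e3 d"
proof -
  obtain P N where P: "\<forall>t. t \<noteq> 0 \<longrightarrow> torus_char F t * t ^ N = poly P t"
    using Gmorph_on_torus[OF F_morph] by (auto simp: torus_char_def)
  have "\<forall>t\<in>{t. t \<noteq> 0}. poly (P ^ d_e3 d') t = poly (monom 1 (d_e3 d + N * d_e3 d')) t"
  proof
    fix t :: 'k assume "t \<in> {t. t \<noteq> 0}"
    hence t: "t \<noteq> 0" by simp
    have "poly (P ^ d_e3 d') t = (torus_char F t * t ^ N) ^ d_e3 d'" using P t by (simp add: poly_power)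
    also have "\<dots> = t ^ d_e3 d * t ^ (N * d_e3 d')" using torus_char_powers(1)[OF t]
      by (simp add: power_mult_distrib power_mult)
    finally show "poly (P ^ d_e3 d') t = poly (monom 1 (d_e3 d + N * d_e3 d')) t"
      by (simp add: poly_monom power_add)
  qed
  hence eq: "P ^ d_e3 d' = monom 1 (d_e3 d + N * d_e3 d')"
    by (rule poly_eq_on_infinite[OF nonzero_infinite])
  have "P \<noteq> 0" using eq perm_iso.e3_pos[OF swap] by (auto simp: zero_power)
  hence "degree (P ^ d_e3 d') = degree P * d_e3 d'" by (simp add: degree_power_eq)
  hence "degree P * d_e3 d' = d_e3 d + N * d_e3 d'" using eq by (simp add: degree_monom_eq)
  hence "d_e3 d' dvd d_e3 d + N * d_e3 d'" by (metis dvd_triv_right)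
  thus ?thesis by (simp add: dvd_add_left_iff)
qed

lemma e3_eq: "d_e3 d' = d_e3 d"
  using e3_dvd perm_iso.e3_dvd[OF swap] by (simp add: dvd_antisym)

text \<open>Since e3 is 1 or a power of the characteristic, a \<mapsto> a^e3 is injective, so the
  character is the identity and the e2-weights agree.\<close>
lemma torus_char_id:
  assumes a: "a \<noteq> 0" shows "torus_char F a = a"
proof -
  have eq: "torus_char F a ^ d_e3 d = a ^ d_e3 d" using torus_char_powers(1)[OF a] e3_eq by simp
  show ?thesis
  proof (cases "CHAR('k) = 0")
    case True
    hence "d_e3 d = 1" using adm by (simp add: admissible_def)
    thus ?thesis using eq by simp
  next
    case False
    then obtain t where t: "d_e3 d = CHAR('k) ^ t" using adm by (auto simp: admissible_def)
    show ?thesis using char_power_inj[OF _ t eq] False by simp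
  qed
qed

lemma e2_eq: "d_e2 d' = d_e2 d"
  using torus_char_powers(2) torus_char_id by (intro powi_identity_exponent) simp

end

lemma alg_perm_iso_gives_perm_iso:
  fixes \<Phi>1 :: "(('k::alg_closed_field \<times> 'k \<times> 'k) \<times> 'k) \<Rightarrow> (('k \<times> 'k \<times> 'k) \<times> 'k)"
  assumes adm: "admissible TYPE('k) d" "admissible TYPE('k) d'"
    and iso: "alg_perm_iso TYPE('k) d d' \<Phi>1 \<Phi>2"
  obtains \<Psi> where "perm_iso d d' \<Phi>1 \<Psi>"
proof -
  obtain \<Psi> where \<Psi>: "Gmorph \<Psi>" "\<forall>g\<in>Gcarrier. \<Psi> (\<Phi>1 g) = g \<and> \<Phi>1 (\<Psi> g) = g"
    using iso unfolding alg_perm_iso_def by blast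
  have "perm_iso d d' \<Phi>1 \<Psi>"
    using adm \<Psi> iso alg_perm_iso_transports_action[OF iso]
    by unfold_locales (auto simp: alg_perm_iso_def)
  thus thesis by (rule that)
qed

theorem mainTheorem17:
  fixes d d' :: gdata
    and \<Phi>1 :: "(('k::alg_closed_field \<times> 'k \<times> 'k) \<times> 'k) \<Rightarrow> (('k \<times> 'k \<times> 'k) \<times> 'k)"
    and \<Phi>2 :: "'k \<times> 'k \<Rightarrow> 'k \<times> 'k"
  assumes "admissible TYPE('k) d"
    and "admissible TYPE('k) d'"
    and "alg_perm_iso TYPE('k) d d' \<Phi>1 \<Phi>2"
  shows "(d_e2 d', d_e3 d', h2 TYPE('k) d', h3 TYPE('k) d')
       = (d_e2 d, d_e3 d, h2 TYPE('k) d, h3 TYPE('k) d)"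
proof -
  obtain \<Psi> where "perm_iso d d' \<Phi>1 \<Psi>" using alg_perm_iso_gives_perm_iso[OF assms] .
  then interpret perm_iso d d' \<Phi>1 \<Psi> .
  show ?thesis using e2_eq e3_eq h_eq by simp
qed

end
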